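(* If a $T_1$-space $X$ has a strong development at non-isolated points, then $X$ is monotonically normal and paracompact.
   Context: $I(X)$ is the set of isolated points, $\mathcal{I}(X)=\{\{x\}:x\in I(X)\}$, and $\mathrm{st}(A,\mathcal{W})=\bigcup\{W\in\mathcal{W}:W\cap A\neq\emptyset\}$. A sequence $\{\mathcal{W}_i\}_{i\in\mathbb{N}}$ of open covers of $X$ with $\mathcal{I}(X)\subset\bigcup_i\mathcal{W}_i$ is a strong development at non-isolated points if for every $x\in X\setminus I(X)$ and every neighborhood $U$ of $x$ there are a neighborhood $V$ of $x$ and $i\in\mathbb{N}$ with $\mathrm{st}(V,\mathcal{W}_i)\subset U$. $X$ is monotonically normal if to each pair $(p,C)$ with $C$ closed and $p\notin C$ one can assign an open set $H(p,C)$ with (i) $p\in H(p,C)\subset X\setminus C$; (ii) if $D\subset C$ is closed then $H(p,C)\subset H(p,D)$; (iii) if $p\neq q$ then $H(p,\{q\})\cap H(q,\{p\})=\emptyset$. *)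

theory Defs
  imports "HOL-Analysis.Analysis"
begin

definition isolated_pts :: "'a::topological_space set" where
  "isolated_pts = {x. open {x}}"

definition star :: "'a set \<Rightarrow> 'a set set \<Rightarrow> 'a set" where
  "star A \<W> = \<Union>{W \<in> \<W>. W \<inter> A \<noteq> {}}"

definition open_cover :: "'a::topological_space set set \<Rightarrow> bool" where
  "open_cover \<W> \<longleftrightarrow> (\<forall>W\<in>\<W>. open W) \<and> \<Union>\<W> = UNIV"

definition strong_development_nonisolated ::
  "(nat \<Rightarrow> 'a::topological_space set set) \<Rightarrow> bool" where
  "strong_development_nonisolated \<W> \<longleftrightarrow>
     (\<forall>i. open_cover (\<W> i)) \<and>
     {{x} | x. x \<in> isolated_pts} \<subseteq> (\<Union>i. \<W> i) \<and>
     (\<forall>x. x \<notin> isolated_pts \<longrightarrow>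
        (\<forall>U. open U \<and> x \<in> U \<longrightarrow>
           (\<exists>V i. open V \<and> x \<in> V \<and> star V (\<W> i) \<subseteq> U)))"

definition has_strong_development_nonisolated :: "'a::topological_space itself \<Rightarrow> bool" where
  "has_strong_development_nonisolated _ \<longleftrightarrow>
     (\<exists>\<W> :: nat \<Rightarrow> 'a set set. strong_development_nonisolated \<W>)"

definition monotonically_normal :: "'a::topological_space itself \<Rightarrow> bool" where
  "monotonically_normal _ \<longleftrightarrow>
     (\<exists>H :: 'a \<Rightarrow> 'a set \<Rightarrow> 'a set.
        (\<forall>p C. closed C \<and> p \<notin> C \<longrightarrow> open (H p C) \<and> p \<in> H p C \<and> H p C \<subseteq> - C) \<and>
        (\<forall>p C D. closed C \<and> closed D \<and> D \<subseteq> C \<and> p \<notin> C \<longrightarrow> H p C \<subseteq> H p D) \<and>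
        (\<forall>p q. p \<noteq> q \<longrightarrow> H p {q} \<inter> H q {p} = {}))"

definition locally_finite_family :: "'a::topological_space set set \<Rightarrow> bool" where
  "locally_finite_family \<V> \<longleftrightarrow>
     (\<forall>x. \<exists>N. open N \<and> x \<in> N \<and> finite {V \<in> \<V>. V \<inter> N \<noteq> {}})"

text \<open>Paracompact (Engelking convention): Hausdorff, and every open cover has a
  locally finite open refinement.\<close>
definition paracompact :: "'a::topological_space itself \<Rightarrow> bool" where
  "paracompact _ \<longleftrightarrow>
     (\<forall>x y :: 'a. x \<noteq> y \<longrightarrow> (\<exists>U V. open U \<and> open V \<and> x \<in> U \<and> y \<in> V \<and> U \<inter> V = {})) \<and>
     (\<forall>\<U> :: 'a set set. open_cover \<U> \<longrightarrow>
        (\<exists>\<V>. open_cover \<V> \<and> (\<forall>V\<in>\<V>. \<exists>U\<in>\<U>. V \<subseteq> U) \<and> locally_finite_family \<V>))"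

end

theory Submission
  imports Defs
begin

(* Write x ~i y (near i x y) when x and y lie in a common member of each of W 0, ..., W i.
   At a non-isolated point x the strong development condition shows that, for each fixed k,
   all k-step ~n-chains starting at x stay inside a given neighbourhood of x once n is large.
   Monotone normality: H(p, C) is the ~n-ball of p for the least n whose 2-chains from p avoid C;
   comparing the levels chosen for p and q shows that H(p, {q}) and H(q, {p}) are disjoint.
   Paracompactness: well-order the cover and label each point by the least member containing it.
   Stage n uses the ~n-balls of the not yet covered points whose 4-chains stay inside their
   label, grouped by label. Two groups of one stage cannot both come ~n-close to a point,
   because a 4-chain would join their centres and force equal labels, and a point covered at
   stage n is far from all balls of later stages; this gives local finiteness at non-isolated
   points, and isolated points are covered by singletons. *)

lemma cover_choice_coherent:
  fixes \<U> :: "'a set set"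
  assumes "\<Union>\<U> = UNIV"
  obtains f where "\<And>x. x \<in> f x" "\<And>x. f x \<in> \<U>"
    and "\<And>y z. y \<in> f z \<Longrightarrow> z \<in> f y \<Longrightarrow> f y = f z"
proof -
  obtain r :: "'a set rel" where r: "Well_order r" "Field r = UNIV"
    using well_ordering[where 'a="'a set"] by blast
  then interpret wo_rel r by (simp add: wo_rel_def)
  define f where "f x = minim {U \<in> \<U>. x \<in> U}" for x
  have f_in: "f x \<in> {U \<in> \<U>. x \<in> U}" for x
    unfolding f_def using assms r(2) by (intro minim_in) auto
  have f_least: "(f x, U) \<in> r" if "U \<in> \<U>" "x \<in> U" for x U
    unfolding f_def using that r(2) by (intro minim_least) auto
  show thesis
  proof (rule that)
    show "x \<in> f x" "f x \<in> \<U>" for x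
      using f_in by simp_all
    show "f y = f z" if "y \<in> f z" "z \<in> f y" for y z
    proof -
      have "(f y, f z) \<in> r" "(f z, f y) \<in> r"
        using f_least f_in that by simp_all
      then show ?thesis
        by (rule antisymD[OF ANTISYM])
    qed
  qed
qed

lemma monotonically_normal_imp_separated:
  assumes "monotonically_normal TYPE('a::t1_space)" "x \<noteq> y"
  shows "\<exists>U V. open U \<and> open V \<and> x \<in> (U :: 'a set) \<and> y \<in> V \<and> U \<inter> V = {}"
proof -
  obtain H :: "'a \<Rightarrow> 'a set \<Rightarrow> 'a set" where H:
    "(\<forall>p C. closed C \<and> p \<notin> C \<longrightarrow> open (H p C) \<and> p \<in> H p C \<and> H p C \<subseteq> - C) \<and>
     (\<forall>p C D. closed C \<and> closed D \<and> D \<subseteq> C \<and> p \<notin> C \<longrightarrow> H p C \<subseteq> H p D) \<and>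
     (\<forall>p q. p \<noteq> q \<longrightarrow> H p {q} \<inter> H q {p} = {})"
    using assms(1) unfolding monotonically_normal_def by (rule exE)
  note H_open = H[THEN conjunct1, rule_format]
    and H_disjoint = H[THEN conjunct2, THEN conjunct2, rule_format]
  show ?thesis
    using H_open[where p = x and C = "{y}"] H_open[where p = y and C = "{x}"]
      H_disjoint[OF assms(2)] assms(2)
    by (intro exI[of _ "H x {y}"] exI[of _ "H y {x}"]) auto
qed

lemma locally_finite_family_add_singletons:
  fixes \<V> :: "'a::topological_space set set"
  assumes "open (\<Union>\<V>)"
    and isolated: "\<And>x. x \<notin> \<Union>\<V> \<Longrightarrow> open {x}"
    and locally_finite: "\<And>x. x \<in> \<Union>\<V> \<Longrightarrow>
      \<exists>N. open N \<and> x \<in> N \<and> finite {V \<in> \<V>. V \<inter> N \<noteq> {}}"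
  shows "locally_finite_family (\<V> \<union> (\<lambda>x. {x}) ` (- \<Union>\<V>))"
  unfolding locally_finite_family_def
proof
  fix x
  let ?\<W> = "\<V> \<union> (\<lambda>x. {x}) ` (- \<Union>\<V>)"
  show "\<exists>N. open N \<and> x \<in> N \<and> finite {W \<in> ?\<W>. W \<inter> N \<noteq> {}}"
  proof (cases "x \<in> \<Union>\<V>")
    case True
    then obtain N where N: "open N" "x \<in> N" "finite {V \<in> \<V>. V \<inter> N \<noteq> {}}"
      using locally_finite by blast
    have "{W \<in> ?\<W>. W \<inter> (N \<inter> \<Union>\<V>) \<noteq> {}} \<subseteq> {V \<in> \<V>. V \<inter> N \<noteq> {}}"
      by blast
    then have "finite {W \<in> ?\<W>. W \<inter> (N \<inter> \<Union>\<V>) \<noteq> {}}"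
      using N(3) by (rule finite_subset)
    moreover have "open (N \<inter> \<Union>\<V>)" "x \<in> N \<inter> \<Union>\<V>"
      using N(1,2) True \<open>open (\<Union>\<V>)\<close> by auto
    ultimately show ?thesis
      by (intro exI[of _ "N \<inter> \<Union>\<V>"]) simp
  next
    case False
    have "{W \<in> ?\<W>. W \<inter> {x} \<noteq> {}} \<subseteq> {{x}}"
      using False by blast
    then have "finite {W \<in> ?\<W>. W \<inter> {x} \<noteq> {}}"
      by (rule finite_subset) simp
    then show ?thesis
      using isolated[OF False] by (intro exI[of _ "{x}"]) simp
  qed
qed

lemma locally_finite_refinement_extend_isolated:
  fixes \<U> \<V> :: "'a::topological_space set set"
  assumes "\<Union>\<U> = UNIV"
    and open_\<V>: "\<And>V. V \<in> \<V> \<Longrightarrow> open V"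
    and refines: "\<And>V. V \<in> \<V> \<Longrightarrow> \<exists>U\<in>\<U>. V \<subseteq> U"
    and covers: "- isolated_pts \<subseteq> \<Union>\<V>"
    and locally_finite: "\<And>x. x \<notin> isolated_pts \<Longrightarrow>
      \<exists>N. open N \<and> x \<in> N \<and> finite {V \<in> \<V>. V \<inter> N \<noteq> {}}"
  shows "\<exists>\<W>. open_cover \<W> \<and> (\<forall>W\<in>\<W>. \<exists>U\<in>\<U>. W \<subseteq> U) \<and> locally_finite_family \<W>"
proof -
  define M where "M = {x. \<exists>N. open N \<and> x \<in> N \<and> finite {V \<in> \<V>. V \<inter> N \<noteq> {}}}"
  define \<V>' where "\<V>' = (\<lambda>V. V \<inter> M) ` \<V>"
  define \<W> where "\<W> = \<V>' \<union> (\<lambda>x. {x}) ` (- \<Union>\<V>')"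
  have "\<forall>x\<in>M. \<exists>N. open N \<and> x \<in> N \<and> N \<subseteq> M"
    unfolding M_def by blast
  then have "open M"
    by (subst open_subopen)
  then have open_\<V>': "open V'" if "V' \<in> \<V>'" for V'
    using that open_\<V> unfolding \<V>'_def by blast
  have isolated: "open {x}" if "x \<notin> \<Union>\<V>'" for x
  proof -
    have "x \<in> isolated_pts"
    proof (rule ccontr)
      assume "x \<notin> isolated_pts"
      then have "x \<in> M" "x \<in> \<Union>\<V>"
        using covers locally_finite[of x] unfolding M_def by auto
      then show False
        using that unfolding \<V>'_def by blast
    qed
    then show ?thesis
      by (simp add: isolated_pts_def)
  qed
  have "locally_finite_family \<W>"
    unfolding \<W>_def
  proof (rule locally_finite_family_add_singletons)
    show "open (\<Union>\<V>')"
      using open_\<V>' by blast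
    show "\<exists>N. open N \<and> x \<in> N \<and> finite {V' \<in> \<V>'. V' \<inter> N \<noteq> {}}"
      if "x \<in> \<Union>\<V>'" for x
    proof -
      from that have "x \<in> M"
        unfolding \<V>'_def by blast
      then obtain N where N: "open N" "x \<in> N" "finite {V \<in> \<V>. V \<inter> N \<noteq> {}}"
        unfolding M_def by blast
      have "{V' \<in> \<V>'. V' \<inter> N \<noteq> {}} \<subseteq> (\<lambda>V. V \<inter> M) ` {V \<in> \<V>. V \<inter> N \<noteq> {}}"
        unfolding \<V>'_def by blast
      then have "finite {V' \<in> \<V>'. V' \<inter> N \<noteq> {}}"
        using finite_imageI[OF N(3)] by (rule finite_subset)
      then show ?thesis
        using N(1,2) by (intro exI[of _ N]) simp
    qed
  qed (fact isolated)
  moreover have member_\<W>: "open W \<and> (\<exists>U\<in>\<U>. W \<subseteq> U)" if W: "W \<in> \<W>" for W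
  proof -
    consider V where "V \<in> \<V>" "W = V \<inter> M" | x where "x \<notin> \<Union>\<V>'" "W = {x}"
      using W unfolding \<W>_def \<V>'_def by blast
    then show ?thesis
    proof cases
      case 1
      then have "W \<in> \<V>'"
        unfolding \<V>'_def by blast
      then have "open W"
        by (rule open_\<V>')
      moreover have "\<exists>U\<in>\<U>. W \<subseteq> U"
        using refines[OF 1(1)] 1(2) by blast
      ultimately show ?thesis ..
    next
      case (2 x)
      have "x \<in> \<Union>\<U>"
        using assms(1) by simp
      then have "\<exists>U\<in>\<U>. W \<subseteq> U"
        using 2(2) by blast
      moreover have "open W"
        using isolated[OF 2(1)] 2(2) by simp
      ultimately show ?thesis
        by blast
    qed
  qed
  moreover have "x \<in> \<Union>\<W>" for x
    by (cases "x \<in> \<Union>\<V>'") (auto simp: \<W>_def)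
  then have "open_cover \<W>"
    unfolding open_cover_def using member_\<W> by blast
  ultimately show ?thesis
    using member_\<W> by (intro exI[of _ \<W>]) blast
qed

locale nonisolated_strong_development =
  fixes \<W> :: "nat \<Rightarrow> 'a::t1_space set set"
  assumes open_cover_\<W>: "open_cover (\<W> i)"
    and star_shrinks: "x \<notin> isolated_pts \<Longrightarrow> open U \<Longrightarrow> x \<in> U \<Longrightarrow>
      \<exists>V i. open V \<and> x \<in> V \<and> star V (\<W> i) \<subseteq> U"
begin

definition near :: "nat \<Rightarrow> 'a \<Rightarrow> 'a \<Rightarrow> bool" where
  "near i a b \<longleftrightarrow> (\<forall>k\<le>i. \<exists>W\<in>\<W> k. a \<in> W \<and> b \<in> W)"

definition near_ball :: "nat \<Rightarrow> 'a \<Rightarrow> 'a set" where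
  "near_ball i x = {y. near i x y}"

lemma near_refl: "near i x x"
proof -
  have "x \<in> \<Union>(\<W> k)" for k
    using open_cover_\<W>[of k] by (simp add: open_cover_def)
  then show ?thesis
    unfolding near_def by blast
qed

lemma near_sym: "near i x y \<Longrightarrow> near i y x"
  unfolding near_def by blast

lemma near_antimono: "near j x y \<Longrightarrow> i \<le> j \<Longrightarrow> near i x y"
  unfolding near_def by auto

lemma near_chain_antimono:
  assumes "(near j ^^ k) x y" "i \<le> j"
  shows "(near i ^^ k) x y"
  by (rule relpowp_mono[OF _ assms(1)]) (rule near_antimono[OF _ assms(2)])

lemma near_chain2:
  assumes "near i a b" "near i b c"
  shows "(near i ^^ 2) a c"
proof -
  have "(near i ^^ Suc (Suc 0)) a c"
    using assms by (intro relpowp_Suc_I[OF relpowp_Suc_I[OF relpowp_0_I]])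
  then show ?thesis
    by (simp only: numeral_2_eq_2)
qed

lemma near_chain4:
  assumes "near i a b" "near i b c" "near i c d" "near i d e"
  shows "(near i ^^ 4) a e"
proof -
  have four: "(4::nat) = Suc (Suc (Suc (Suc 0)))"
    by simp
  have "(near i ^^ Suc (Suc (Suc (Suc 0)))) a e"
    using assms
    by (intro relpowp_Suc_I[OF relpowp_Suc_I[OF relpowp_Suc_I[OF relpowp_Suc_I[OF relpowp_0_I]]]])
  then show ?thesis
    unfolding four .
qed

lemma self_in_near_ball: "x \<in> near_ball i x"
  by (simp add: near_ball_def near_refl)

lemma near_ball_antimono: "i \<le> j \<Longrightarrow> near_ball j x \<subseteq> near_ball i x"
  by (auto simp: near_ball_def intro: near_antimono)

lemma open_near_ball: "open (near_ball i x)"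
proof -
  have "near_ball i x = (\<Inter>k\<in>{..i}. \<Union>{W \<in> \<W> k. x \<in> W})"
    unfolding near_ball_def near_def by auto
  moreover have "open (\<Union>{W \<in> \<W> k. x \<in> W})" for k
    using open_cover_\<W>[of k] unfolding open_cover_def by (intro open_Union) blast
  ultimately show ?thesis
    by (simp add: open_INT)
qed

lemma near_chains_eventually_inside:
  assumes "x \<notin> isolated_pts" "open U" "x \<in> U"
  shows "\<exists>n. \<forall>y. (near n ^^ k) x y \<longrightarrow> y \<in> U"
  using assms(2,3)
proof (induction k arbitrary: U)
  case 0
  then show ?case by auto
next
  case (Suc k)
  obtain V i where V: "open V" "x \<in> V" "star V (\<W> i) \<subseteq> U"
    using star_shrinks[OF assms(1) Suc.prems] by blast
  obtain n where n: "\<And>y. (near n ^^ k) x y \<Longrightarrow> y \<in> V"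
    using Suc.IH[OF V(1,2)] by blast
  have "y \<in> U" if chain: "(near (max n i) ^^ Suc k) x y" for y
  proof -
    obtain z where "(near (max n i) ^^ k) x z" "near (max n i) z y"
      using chain by (rule relpowp_Suc_E)
    then have "z \<in> V" "near i z y"
      using n near_chain_antimono near_antimono by auto
    then obtain W where "W \<in> \<W> i" "z \<in> W" "y \<in> W" "W \<inter> V \<noteq> {}"
      unfolding near_def by blast
    then show "y \<in> U"
      using V(3) by (auto simp: star_def)
  qed
  then show ?case by blast
qed

definition separation_level :: "'a \<Rightarrow> 'a set \<Rightarrow> nat" where
  "separation_level p C = (LEAST n. \<forall>y. (near n ^^ 2) p y \<longrightarrow> y \<notin> C)"

definition mn_operator :: "'a \<Rightarrow> 'a set \<Rightarrow> 'a set" where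
  "mn_operator p C = (if p \<in> isolated_pts then {p} else near_ball (separation_level p C) p)"

lemma separation_level_avoids:
  assumes "p \<notin> isolated_pts" "closed C" "p \<notin> C" "(near (separation_level p C) ^^ 2) p y"
  shows "y \<notin> C"
proof -
  have "\<exists>n. \<forall>y. (near n ^^ 2) p y \<longrightarrow> y \<in> - C"
    using near_chains_eventually_inside[OF assms(1), of "- C"] assms(2,3) by (simp add: open_Compl)
  then have "\<exists>n. \<forall>y. (near n ^^ 2) p y \<longrightarrow> y \<notin> C"
    by simp
  then have "\<forall>y. (near (separation_level p C) ^^ 2) p y \<longrightarrow> y \<notin> C"
    unfolding separation_level_def by (rule LeastI_ex)
  then show ?thesis
    using assms(4) by blast
qed

lemma mn_operator_open_separating:
  assumes "closed C" "p \<notin> C"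
  shows "open (mn_operator p C) \<and> p \<in> mn_operator p C \<and> mn_operator p C \<subseteq> - C"
proof (cases "p \<in> isolated_pts")
  case True
  then show ?thesis
    using assms by (auto simp: mn_operator_def isolated_pts_def)
next
  case False
  have "y \<notin> C" if "near (separation_level p C) p y" for y
    using separation_level_avoids[OF False assms] near_chain2[OF near_refl that] by blast
  then show ?thesis
    using False open_near_ball self_in_near_ball by (auto simp: mn_operator_def near_ball_def)
qed

lemma mn_operator_antimono:
  assumes "D \<subseteq> C" "closed C" "p \<notin> C"
  shows "mn_operator p C \<subseteq> mn_operator p D"
proof (cases "p \<in> isolated_pts")
  case False
  have "\<forall>y. (near (separation_level p C) ^^ 2) p y \<longrightarrow> y \<notin> D"
    using separation_level_avoids[OF False assms(2,3)] assms(1) by blast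
  then have "separation_level p D \<le> separation_level p C"
    unfolding separation_level_def[of p D] by (rule Least_le)
  then show ?thesis
    using False near_ball_antimono by (simp add: mn_operator_def)
qed (simp add: mn_operator_def)

lemma mn_operator_disjoint:
  assumes "p \<noteq> q"
  shows "mn_operator p {q} \<inter> mn_operator q {p} = {}"
proof -
  have no_common_point: False
    if "p \<noteq> q" "p \<notin> isolated_pts" "q \<notin> isolated_pts"
      and "near (separation_level p {q}) p z" "near (separation_level q {p}) q z"
      and "separation_level p {q} \<le> separation_level q {p}" for p q z
  proof -
    have "near (separation_level p {q}) z q"
      using that(5,6) near_antimono near_sym by blast
    then show False
      using separation_level_avoids[of p "{q}" q] near_chain2 that(1,2,4) by auto
  qed
  have "p \<notin> mn_operator q {p}" "q \<notin> mn_operator p {q}"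
    using mn_operator_open_separating[of "{p}" q] mn_operator_open_separating[of "{q}" p] assms
    by auto
  show ?thesis
  proof (cases "p \<in> isolated_pts \<or> q \<in> isolated_pts")
    case True
    then show ?thesis
      using \<open>p \<notin> mn_operator q {p}\<close> \<open>q \<notin> mn_operator p {q}\<close>
      by (auto simp: mn_operator_def[of p] mn_operator_def[of q])
  next
    case False
    show ?thesis
    proof (rule ccontr)
      assume "mn_operator p {q} \<inter> mn_operator q {p} \<noteq> {}"
      then obtain z where "near (separation_level p {q}) p z" "near (separation_level q {p}) q z"
        using False by (auto simp: mn_operator_def near_ball_def)
      then show False
        using no_common_point[of p q z] no_common_point[of q p z] False assms
        by (cases "separation_level p {q} \<le> separation_level q {p}") auto
    qed
  qed
qed

lemma monotonically_normal_space: "monotonically_normal TYPE('a)"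
  unfolding monotonically_normal_def
  using mn_operator_open_separating mn_operator_antimono mn_operator_disjoint
  by (intro exI[of _ mn_operator]) blast

end

locale nonisolated_strong_development_choice = nonisolated_strong_development +
  fixes f :: "'a \<Rightarrow> 'a set"
  assumes open_f: "open (f x)" and mem_f: "x \<in> f x"
    and f_coherent: "y \<in> f z \<Longrightarrow> z \<in> f y \<Longrightarrow> f y = f z"
begin

primrec covered :: "nat \<Rightarrow> 'a set" where
  "covered 0 = {}"
| "covered (Suc n) = covered n \<union>
     \<Union>{near_ball n y | y. y \<notin> covered n \<and> (\<forall>z. (near n ^^ 4) y z \<longrightarrow> z \<in> f y)}"

definition piece :: "nat \<Rightarrow> 'a set \<Rightarrow> 'a set" where
  "piece n s =
     \<Union>{near_ball n y | y. y \<notin> covered n \<and> f y = s \<and> (\<forall>z. (near n ^^ 4) y z \<longrightarrow> z \<in> s)}"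

lemma covered_Suc_piece: "covered (Suc n) = covered n \<union> (\<Union>s. piece n s)"
  by (auto simp: piece_def)

lemma covered_eq: "covered n = (\<Union>j<n. \<Union>s. piece j s)"
proof (induction n)
  case (Suc n)
  then show ?case
    by (simp only: covered_Suc_piece lessThan_Suc UN_insert Un_commute)
qed simp

lemma mem_piece:
  assumes "q \<in> piece n s"
  shows "\<exists>y. y \<notin> covered n \<and> f y = s \<and> (\<forall>z. (near n ^^ 4) y z \<longrightarrow> z \<in> s) \<and> near n y q"
  using assms unfolding piece_def near_ball_def by blast

lemma open_piece: "open (piece n s)"
  unfolding piece_def using open_near_ball by auto

lemma piece_subset: "piece n s \<subseteq> s"
proof
  fix q
  assume "q \<in> piece n s"
  then obtain y where "\<forall>z. (near n ^^ 4) y z \<longrightarrow> z \<in> s" "near n y q"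
    using mem_piece by blast
  then show "q \<in> s"
    using near_chain4[OF near_refl near_refl near_refl] by blast
qed

lemma nonisolated_in_piece:
  assumes "x \<notin> isolated_pts"
  shows "\<exists>n y. x \<in> piece n (f y)"
proof -
  obtain n where n: "\<forall>z. (near n ^^ 4) x z \<longrightarrow> z \<in> f x"
    using near_chains_eventually_inside[OF assms open_f mem_f] by blast
  show ?thesis
  proof (cases "x \<in> covered n")
    case True
    then obtain j s where "x \<in> piece j s"
      by (auto simp: covered_eq)
    moreover obtain y where "f y = s"
      using mem_piece[OF \<open>x \<in> piece j s\<close>] by blast
    ultimately show ?thesis
      by blast
  next
    case False
    then have "x \<in> piece n (f x)"
      using n self_in_near_ball unfolding piece_def by blast
    then show ?thesis by blast
  qed
qed

lemma piece_label_unique: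
  assumes "p \<in> piece i s" "q \<in> piece i t" "near i x p" "near i x q"
  shows "s = t"
proof -
  obtain y where y: "f y = s" "\<forall>w. (near i ^^ 4) y w \<longrightarrow> w \<in> s" "near i y p"
    using mem_piece[OF assms(1)] by blast
  obtain z where z: "f z = t" "\<forall>w. (near i ^^ 4) z w \<longrightarrow> w \<in> t" "near i z q"
    using mem_piece[OF assms(2)] by blast
  have "z \<in> f y"
    using y near_chain4[OF y(3) near_sym[OF assms(3)] assms(4) near_sym[OF z(3)]] by blast
  moreover have "y \<in> f z"
    using z near_chain4[OF z(3) near_sym[OF assms(4)] assms(3) near_sym[OF y(3)]] by blast
  ultimately show ?thesis
    using f_coherent y(1) z(1) by metis
qed

lemma pieces_meeting_near_ball_finite:
  "finite {piece k s | s. piece k s \<inter> near_ball k x \<noteq> {}}"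
proof (cases "\<exists>s. piece k s \<inter> near_ball k x \<noteq> {}")
  case True
  then obtain s p where p: "p \<in> piece k s" "near k x p"
    by (auto simp: near_ball_def)
  have "piece k t = piece k s" if meets: "piece k t \<inter> near_ball k x \<noteq> {}" for t
  proof -
    obtain q where "q \<in> piece k t" "near k x q"
      using meets by (auto simp: near_ball_def)
    then show ?thesis
      using piece_label_unique[OF p(1) _ p(2)] by blast
  qed
  then have "{piece k t | t. piece k t \<inter> near_ball k x \<noteq> {}} \<subseteq> {piece k s}"
    by blast
  then show ?thesis
    by (rule finite_subset) simp
next
  case False
  then have "{piece k t | t. piece k t \<inter> near_ball k x \<noteq> {}} = {}"
    by blast
  then show ?thesis
    by (metis finite.emptyI)
qed

lemma piece_far_disjoint:
  assumes "\<forall>y. (near j ^^ 2) x y \<longrightarrow> y \<in> piece n s" "n < i" "j \<le> i"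
  shows "piece i t \<inter> near_ball j x = {}"
proof (rule ccontr)
  assume "piece i t \<inter> near_ball j x \<noteq> {}"
  then obtain q where q: "q \<in> piece i t" "near j x q"
    by (auto simp: near_ball_def)
  obtain z where z: "z \<notin> covered i" "near i z q"
    using mem_piece[OF q(1)] by blast
  have "(near j ^^ 2) x z"
    using near_chain2[OF q(2)] near_antimono[OF near_sym[OF z(2)] assms(3)] by blast
  then have "z \<in> covered i"
    using assms(1,2) by (auto simp: covered_eq)
  then show False
    using z(1) by blast
qed

lemma pieces_locally_finite:
  assumes "x \<notin> isolated_pts"
  shows "\<exists>N. open N \<and> x \<in> N \<and> finite {piece i s | i s. piece i s \<inter> N \<noteq> {}}"
proof -
  obtain n s0 where "x \<in> piece n s0"
    using nonisolated_in_piece[OF assms] by blast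
  then obtain j where j: "\<forall>y. (near j ^^ 2) x y \<longrightarrow> y \<in> piece n s0"
    using near_chains_eventually_inside[OF assms open_piece, where k = 2] by blast
  define m where "m = max (Suc n) j"
  have "n < m" "j \<le> m"
    by (simp_all add: m_def)
  have early: "i < m" if meets: "piece i s \<inter> near_ball m x \<noteq> {}" for i s
  proof (rule ccontr)
    assume "\<not> i < m"
    then have "piece i s \<inter> near_ball j x = {}"
      using piece_far_disjoint[OF j] \<open>n < m\<close> \<open>j \<le> m\<close> by simp
    then show False
      using meets near_ball_antimono[OF \<open>j \<le> m\<close>, of x] by blast
  qed
  have "{piece i s | i s. piece i s \<inter> near_ball m x \<noteq> {}} \<subseteq>
      (\<Union>k<m. {piece k s | s. piece k s \<inter> near_ball k x \<noteq> {}})"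
  proof
    fix V
    assume "V \<in> {piece i s | i s. piece i s \<inter> near_ball m x \<noteq> {}}"
    then obtain i s where V: "V = piece i s" "piece i s \<inter> near_ball m x \<noteq> {}"
      by blast
    moreover from V(2) have "i < m"
      by (rule early)
    ultimately have "piece i s \<inter> near_ball i x \<noteq> {}"
      using near_ball_antimono[of i m x] by auto
    then show "V \<in> (\<Union>k<m. {piece k s | s. piece k s \<inter> near_ball k x \<noteq> {}})"
      using V(1) \<open>i < m\<close> by blast
  qed
  moreover have "finite (\<Union>k<m. {piece k s | s. piece k s \<inter> near_ball k x \<noteq> {}})"
    using pieces_meeting_near_ball_finite by simp
  ultimately have "finite {piece i s | i s. piece i s \<inter> near_ball m x \<noteq> {}}"
    by (rule finite_subset)
  then show ?thesis
    using open_near_ball self_in_near_ball by (intro exI[of _ "near_ball m x"]) simp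
qed

end

context nonisolated_strong_development
begin

lemma open_cover_has_locally_finite_refinement:
  fixes \<U> :: "'a set set"
  assumes "open_cover \<U>"
  shows "\<exists>\<V>. open_cover \<V> \<and> (\<forall>V\<in>\<V>. \<exists>U\<in>\<U>. V \<subseteq> U) \<and> locally_finite_family \<V>"
proof -
  have "\<Union>\<U> = UNIV"
    using assms by (simp add: open_cover_def)
  then obtain f where f: "\<And>x. x \<in> f x" "\<And>x. f x \<in> \<U>"
    and "\<And>y z. y \<in> f z \<Longrightarrow> z \<in> f y \<Longrightarrow> f y = f z"
    by (rule cover_choice_coherent) blast
  moreover have "\<And>x. open (f x)"
    using f(2) assms by (simp add: open_cover_def)
  ultimately interpret nonisolated_strong_development_choice \<W> f
    by unfold_locales auto
  define \<V> where "\<V> = {piece n (f y) | n y. True}"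
  have open_\<V>: "open V" and refines: "\<exists>U\<in>\<U>. V \<subseteq> U" if "V \<in> \<V>" for V
  proof -
    from that obtain n y where "V = piece n (f y)"
      unfolding \<V>_def by blast
    then show "open V" "\<exists>U\<in>\<U>. V \<subseteq> U"
      using open_piece piece_subset f(2) by blast+
  qed
  have covers: "- isolated_pts \<subseteq> \<Union>\<V>"
    unfolding \<V>_def using nonisolated_in_piece by blast
  have locally_finite: "\<exists>N. open N \<and> x \<in> N \<and> finite {V \<in> \<V>. V \<inter> N \<noteq> {}}"
    if nonisolated: "x \<notin> isolated_pts" for x
  proof -
    obtain N where N: "open N" "x \<in> N" "finite {piece i s | i s. piece i s \<inter> N \<noteq> {}}"
      using pieces_locally_finite[OF nonisolated] by blast
    have "{V \<in> \<V>. V \<inter> N \<noteq> {}} \<subseteq> {piece i s | i s. piece i s \<inter> N \<noteq> {}}"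
      unfolding \<V>_def by blast
    then have "finite {V \<in> \<V>. V \<inter> N \<noteq> {}}"
      using N(3) by (rule finite_subset)
    then show ?thesis
      using N(1,2) by (intro exI[of _ N]) simp
  qed
  show ?thesis
    using locally_finite_refinement_extend_isolated[OF \<open>\<Union>\<U> = UNIV\<close> open_\<V> refines covers
        locally_finite] .
qed

lemma paracompact_space: "paracompact TYPE('a)"
  unfolding paracompact_def
  by (intro conjI allI impI monotonically_normal_imp_separated[OF monotonically_normal_space]
      open_cover_has_locally_finite_refinement)

end

theorem mainTheorem4:
  assumes "has_strong_development_nonisolated TYPE('a::t1_space)"
  shows "monotonically_normal TYPE('a) \<and> paracompact TYPE('a)"
proof -
  obtain \<W> :: "nat \<Rightarrow> 'a set set" where "strong_development_nonisolated \<W>"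
    using assms unfolding has_strong_development_nonisolated_def by blast
  then interpret nonisolated_strong_development \<W>
    by unfold_locales (auto simp: strong_development_nonisolated_def)
  show ?thesis
    using monotonically_normal_space paracompact_space by blast
qed

end
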